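(* Let $\mathcal{P},\mathcal{Q}\in\mathbb{R}[\xi]^{\ell\times n}$ be two real matrix polynomials of the same size. Then there exist unimodular matrix polynomials $\mathcal{U}\in\mathbb{R}[\xi]^{\ell\times\ell}$ and $\mathcal{V}\in\mathbb{R}[\xi]^{n\times n}$, nonnegative integers $r_P,m,q,r_1,\dots,r_q,s_1,\dots,s_q$ with $r_P+m+r_1+\dots+r_q=n$ and $r_P+r_1+\dots+r_q+s_1+\dots+s_q=\ell$, such that the following holds. Partition the columns of $\mathcal{U}\mathcal{P}\mathcal{V}$ and $\mathcal{U}\mathcal{Q}\mathcal{V}$ into consecutive groups $C_P, C_0, C_1,\dots,C_q$ of sizes $r_P,m,r_1,\dots,r_q$, and partition their rows into consecutive groups $R_P,R_1,\dots,R_q,S_1,\dots,S_q$ of sizes $r_P,r_1,\dots,r_q,s_1,\dots,s_q$. Denote by $X[R,C]$ the block of a matrix $X$ in row group $R$ and column group $C$. Then: (a) $(\mathcal{U}\mathcal{P}\mathcal{V})[R_P,C_P]=\Sigma_P$, $(\mathcal{U}\mathcal{P}\mathcal{V})[R_P,C_0]=0$; for every $a$, the blocks of $\mathcal{U}\mathcal{P}\mathcal{V}$ in rows $R_a$ and in rows $S_a$ vanish in the columns $C_P$, $C_0$ and $C_b$ for all $b\le a$ (the blocks in columns $C_b$, $b>a$, and all blocks of row group $R_P$ in columns $C_1,\dots,C_q$ are arbitrary); (b) $(\mathcal{U}\mathcal{Q}\mathcal{V})[R_P,C_P]=\mathcal{Q}_{11}$, $(\mathcal{U}\mathcal{Q}\mathcal{V})[R_P,C_0]=\mathcal{Q}_{12}$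 (arbitrary); for every $a$, the blocks of $\mathcal{U}\mathcal{Q}\mathcal{V}$ in rows $R_a$ vanish in the columns $C_P,C_0$ and $C_b$ for $b<a$, and $(\mathcal{U}\mathcal{Q}\mathcal{V})[R_a,C_a]=\Sigma_a$; the blocks in rows $S_a$ vanish in the columns $C_P,C_0$ and $C_b$ for all $b\le a$ (all remaining blocks are arbitrary). Here $\Sigma_P$ is an $r_P\times r_P$ diagonal matrix polynomial and each $\Sigma_a$ is an $r_a\times r_a$ diagonal matrix polynomial $\mathrm{diag}(p_{a,1},\dots,p_{a,r_a})$, all diagonal entries being monic polynomials.
   Context: A square matrix polynomial $\mathcal{M}\in\mathbb{R}[\xi]^{k\times k}$ is called unimodular if $\det \mathcal{M}$ is a nonzero constant. A scalar polynomial is monic if its leading coefficient is $1$. Block groups of size zero are allowed. *)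

theory Defs
  imports "HOL-Computational_Algebra.Polynomial" "Jordan_Normal_Form.Determinant"
begin

definition unimodular :: "real poly mat \<Rightarrow> bool" where
  "unimodular M \<longleftrightarrow> dim_row M = dim_col M \<and> det M \<noteq> 0 \<and> degree (det M) = 0"

definition monic :: "real poly \<Rightarrow> bool" where
  "monic p \<longleftrightarrow> lead_coeff p = 1"

definition block_zero :: "real poly mat \<Rightarrow> nat set \<Rightarrow> nat set \<Rightarrow> bool" where
  "block_zero X I J \<longleftrightarrow> (\<forall>i\<in>I. \<forall>j\<in>J. X $$ (i, j) = 0)"

definition diag_monic_block :: "real poly mat \<Rightarrow> nat \<Rightarrow> nat \<Rightarrow> nat \<Rightarrow> bool" where
  "diag_monic_block X ro co k \<longleftrightarrow>
     (\<forall>x<k. \<forall>y<k. (x \<noteq> y \<longrightarrow> X $$ (ro + x, co + y) = 0) \<and>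
                  (x = y \<longrightarrow> monic (X $$ (ro + x, co + x))))"

text \<open>Block groups, indexed from 0 (group a here is group a+1 of the paper).
  Column groups: C_P, C_0, C_0', ..., C_(q-1)'; row groups: R_P, R_0,...,R_(q-1), S_0,...,S_(q-1).\<close>
definition colP :: "nat \<Rightarrow> nat set" where "colP rP = {0..<rP}"
definition col0 :: "nat \<Rightarrow> nat \<Rightarrow> nat set" where "col0 rP m = {rP..<rP+m}"
definition colC :: "nat \<Rightarrow> nat \<Rightarrow> (nat \<Rightarrow> nat) \<Rightarrow> nat \<Rightarrow> nat set" where
  "colC rP m r a = {rP + m + (\<Sum>i<a. r i) ..< rP + m + (\<Sum>i<Suc a. r i)}"
definition rowP :: "nat \<Rightarrow> nat set" where "rowP rP = {0..<rP}"
definition rowR :: "nat \<Rightarrow> (nat \<Rightarrow> nat) \<Rightarrow> nat \<Rightarrow> nat set" where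
  "rowR rP r a = {rP + (\<Sum>i<a. r i) ..< rP + (\<Sum>i<Suc a. r i)}"
definition rowS :: "nat \<Rightarrow> (nat \<Rightarrow> nat) \<Rightarrow> nat \<Rightarrow> (nat \<Rightarrow> nat) \<Rightarrow> nat \<Rightarrow> nat set" where
  "rowS rP r q s a = {rP + (\<Sum>i<q. r i) + (\<Sum>i<a. s i) ..< rP + (\<Sum>i<q. r i) + (\<Sum>i<Suc a. s i)}"

end

(* Induction on the number of rows.  Unimodular row and column operations bring P to a diagonal
   matrix with k monic nonzero entries (Euclidean division lowers the degree of the corner entry
   until it divides its row and column, which are then cleared), so the last l - k rows of P
   vanish.  Operations on these rows alone, together with column operations, diagonalise the last
   l - k rows of Q, and a column rotation moves their t pivots to the last t columns.  These rows
   become the groups R_q (pivot rows) and S_q, the last t columns become C_q; the induction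
   hypothesis for the upper left k x (n - t) blocks of both matrices supplies all other groups,
   and a final row rotation moves R_q between R_(q-1) and S_1.  Operations applied to the upper
   left blocks do not disturb the new groups because the lower left blocks of both matrices
   vanish. *)

theory Submission
  imports Defs
begin

subsection \<open>Unimodular matrices\<close>

lemma unimodular_iff_is_unit_det:
  "unimodular M \<longleftrightarrow> dim_row M = dim_col M \<and> is_unit (det M)"
  unfolding unimodular_def by (cases "det M = 0") (auto simp: is_unit_iff_degree)

lemma unimodular_one: "unimodular (1\<^sub>m n)"
  by (simp add: unimodular_iff_is_unit_det)

lemma unimodular_mult:
  assumes "U \<in> carrier_mat n n" "V \<in> carrier_mat n n" "unimodular U" "unimodular V"
  shows "unimodular (U * V)"
proof -
  have "is_unit (det U * det V)" using assms by (simp add: unimodular_iff_is_unit_det)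
  then show ?thesis using assms(1,2) by (simp add: unimodular_iff_is_unit_det det_mult)
qed

lemma unimodular_transpose:
  assumes "unimodular U" shows "unimodular (transpose_mat U)"
proof -
  have "U \<in> carrier_mat (dim_row U) (dim_row U)"
    using assms unfolding unimodular_def carrier_mat_def by simp
  then have "det (transpose_mat U) = det U" by (rule det_transpose)
  then show ?thesis using assms unfolding unimodular_iff_is_unit_det by simp
qed

lemma unimodular_block_diag:
  assumes "U \<in> carrier_mat a a" "W \<in> carrier_mat b b" "unimodular U" "unimodular W"
  shows "unimodular (four_block_mat U (0\<^sub>m a b) (0\<^sub>m b a) W)"
proof -
  have "is_unit (det U * det W)" using assms unfolding unimodular_iff_is_unit_det by simp
  then show ?thesis
    using assms(1,2) det_four_block_mat_upper_right_zero[of U a "0\<^sub>m a b" b "0\<^sub>m b a" W]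
    unfolding unimodular_iff_is_unit_det by simp
qed

lemma unimodular_if_right_inverse:
  assumes "U \<in> carrier_mat n n" "W \<in> carrier_mat n n" "U * W = 1\<^sub>m n"
  shows "unimodular U"
proof -
  have "det U * det W = 1" using det_mult[OF assms(1,2)] assms(3) by simp
  then show ?thesis using assms(1) unfolding unimodular_iff_is_unit_det
    by (metis carrier_matD dvd_triv_left)
qed

lemma unimodular_addrow_mat: "k \<noteq> l \<Longrightarrow> unimodular (addrow_mat n c k l)"
  using addrow_mat_carrier[of n c k l] by (simp add: unimodular_iff_is_unit_det det_addrow_mat)

lemma unimodular_swaprows_mat:
  assumes "k < n" "l < n" shows "unimodular (swaprows_mat n k l :: real poly mat)"
  using unimodular_if_right_inverse[OF _ _ swaprows_mat_inv[OF assms]] by simp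

lemma unimodular_multrow_mat:
  assumes "k < n" "c \<noteq> 0" shows "unimodular (multrow_mat n k [:c:])"
proof -
  have "is_unit [:c:]" using assms(2) by (metis dvd_field_iff is_unit_const_poly_iff)
  then show ?thesis using assms(1) multrow_mat_carrier[of n k "[:c:]"]
    by (simp add: unimodular_iff_is_unit_det det_multrow_mat)
qed

definition perm_mat :: "nat \<Rightarrow> (nat \<Rightarrow> nat) \<Rightarrow> 'a :: semiring_1 mat" where
  "perm_mat n p = mat n n (\<lambda>(i, j). if p i = j then 1 else 0)"

lemma perm_mat_carrier [simp]: "perm_mat n p \<in> carrier_mat n n"
  and dim_perm_mat [simp]: "dim_row (perm_mat n p) = n" "dim_col (perm_mat n p) = n"
  by (simp_all add: perm_mat_def)

lemma index_perm_mat_mult: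
  assumes "A \<in> carrier_mat n m" "i < n" "j < m" "p i < n"
  shows "(perm_mat n p * A) $$ (i, j) = A $$ (p i, j)"
proof -
  have "(perm_mat n p * A) $$ (i, j) = (\<Sum>h = 0..<n. (if p i = h then 1 else 0) * A $$ (h, j))"
    using assms by (simp add: perm_mat_def scalar_prod_def)
  also have "\<dots> = (\<Sum>h = 0..<n. if h = p i then A $$ (h, j) else 0)"
    by (rule sum.cong) auto
  also have "\<dots> = A $$ (p i, j)"
    using assms(4) by simp
  finally show ?thesis .
qed

lemma unimodular_perm_mat:
  assumes "\<And>i. i < n \<Longrightarrow> p i < n" "\<And>i. i < n \<Longrightarrow> p' (p i) = i"
  shows "unimodular (perm_mat n p :: real poly mat)"
proof (rule unimodular_if_right_inverse[OF perm_mat_carrier perm_mat_carrier])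
  show "perm_mat n p * perm_mat n p' = 1\<^sub>m n"
  proof (rule eq_matI)
    fix i j assume "i < dim_row (1\<^sub>m n)" "j < dim_col (1\<^sub>m n)"
    then show "(perm_mat n p * perm_mat n p') $$ (i, j) = 1\<^sub>m n $$ (i, j)"
      by (subst index_perm_mat_mult) (use assms in \<open>auto simp: perm_mat_def\<close>)
  qed (simp_all add: perm_mat_def)
qed

subsection \<open>Unimodular equivalence and the monic diagonal form\<close>

lemma two_sided_mult_mult:
  assumes "U' \<in> carrier_mat a a" "U \<in> carrier_mat a a" "A \<in> carrier_mat a b"
    "V \<in> carrier_mat b b" "V' \<in> carrier_mat b b"
  shows "U' * (U * A * V) * V' = (U' * U) * A * (V * V')"
proof -
  have "U' * (U * A * V) * V' = U' * (U * A * V * V')"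
    by (rule assoc_mult_mat[of _ a a _ b _ b]) (use assms in auto)
  also have "U * A * V * V' = U * A * (V * V')"
    by (rule assoc_mult_mat[of _ a b _ b _ b]) (use assms in auto)
  also have "U' * (U * A * (V * V')) = U' * (U * A) * (V * V')"
    by (rule assoc_mult_mat[of _ a a _ b _ b, symmetric]) (use assms in auto)
  also have "U' * (U * A) = U' * U * A"
    by (rule assoc_mult_mat[of _ a a _ a _ b, symmetric]) (use assms in auto)
  finally show ?thesis .
qed

definition unimod_equiv :: "real poly mat \<Rightarrow> real poly mat \<Rightarrow> bool" where
  "unimod_equiv A B \<longleftrightarrow> (\<exists>U V. U \<in> carrier_mat (dim_row A) (dim_row A) \<and> unimodular U \<and>
     V \<in> carrier_mat (dim_col A) (dim_col A) \<and> unimodular V \<and> B = U * A * V)"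

lemma unimod_equiv_refl: "unimod_equiv A A"
  unfolding unimod_equiv_def
  by (intro exI[of _ "1\<^sub>m (dim_row A)"] exI[of _ "1\<^sub>m (dim_col A)"])
    (auto simp: unimodular_one)

lemma unimod_equiv_carrier: "unimod_equiv A B \<Longrightarrow> A \<in> carrier_mat a b \<Longrightarrow> B \<in> carrier_mat a b"
  unfolding unimod_equiv_def by auto

lemma unimod_equiv_mult_left:
  assumes "U \<in> carrier_mat a a" "unimodular U" "A \<in> carrier_mat a b"
  shows "unimod_equiv A (U * A)"
  unfolding unimod_equiv_def using assms
  by (intro exI[of _ U] exI[of _ "1\<^sub>m b"]) (auto simp: unimodular_one)

lemma unimod_equiv_trans [trans]:
  assumes "unimod_equiv A B" "unimod_equiv B C" shows "unimod_equiv A C"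
proof -
  obtain U V where U: "U \<in> carrier_mat (dim_row A) (dim_row A)" "unimodular U"
    and V: "V \<in> carrier_mat (dim_col A) (dim_col A)" "unimodular V" and B: "B = U * A * V"
    using assms(1) unfolding unimod_equiv_def by blast
  have dims: "dim_row B = dim_row A" "dim_col B = dim_col A"
    unfolding B using carrier_matD[OF U(1)] carrier_matD[OF V(1)] by simp_all
  obtain U' V' where U': "U' \<in> carrier_mat (dim_row A) (dim_row A)" "unimodular U'"
    and V': "V' \<in> carrier_mat (dim_col A) (dim_col A)" "unimodular V'" and C: "C = U' * B * V'"
    using assms(2) unfolding unimod_equiv_def dims by blast
  have "C = (U' * U) * A * (V * V')"
    unfolding C B by (rule two_sided_mult_mult[OF U'(1) U(1) carrier_mat_triv V(1) V'(1)])
  moreover have "U' * U \<in> carrier_mat (dim_row A) (dim_row A)" "V * V' \<in> carrier_mat (dim_col A) (dim_col A)"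
    using U V U' V' by auto
  ultimately show ?thesis unfolding unimod_equiv_def
    using unimodular_mult[OF U'(1) U(1) U'(2) U(2)] unimodular_mult[OF V(1) V'(1) V(2) V'(2)]
    by (intro exI[of _ "U' * U"] exI[of _ "V * V'"]) simp
qed

lemma unimod_equiv_transpose:
  assumes "unimod_equiv (transpose_mat A) B" shows "unimod_equiv A (transpose_mat B)"
proof -
  obtain U V where U: "U \<in> carrier_mat (dim_col A) (dim_col A)" "unimodular U"
    and V: "V \<in> carrier_mat (dim_row A) (dim_row A)" "unimodular V"
    and B: "B = U * transpose_mat A * V"
    using assms unfolding unimod_equiv_def index_transpose_mat(2,3) by blast
  have UA: "U * transpose_mat A \<in> carrier_mat (dim_col A) (dim_row A)"
    using U(1) by (rule mult_carrier_mat) simp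
  have "transpose_mat B = transpose_mat V * transpose_mat (U * transpose_mat A)"
    unfolding B by (rule transpose_mult[OF UA V(1)])
  also have "transpose_mat (U * transpose_mat A) = A * transpose_mat U"
    using transpose_mult[OF U(1), of "transpose_mat A" "dim_row A"] by simp
  also have "transpose_mat V * (A * transpose_mat U) = transpose_mat V * A * transpose_mat U"
    using U(1) V(1) by (intro assoc_mult_mat[OF _ carrier_mat_triv, symmetric]) simp_all
  finally have "transpose_mat B = transpose_mat V * A * transpose_mat U" .
  then show ?thesis unfolding unimod_equiv_def using U V unimodular_transpose
    by (intro exI[of _ "transpose_mat V"] exI[of _ "transpose_mat U"]) simp
qed

definition monic_diag :: "nat \<Rightarrow> real poly mat \<Rightarrow> bool" where
  "monic_diag k D \<longleftrightarrow> k \<le> dim_row D \<and> k \<le> dim_col D \<and>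
     (\<forall>i < dim_row D. \<forall>j < dim_col D. D $$ (i, j) \<noteq> 0 \<longrightarrow> i = j \<and> i < k) \<and>
     (\<forall>i < k. monic (D $$ (i, i)))"

lemma monic_diag_entry_zero:
  assumes "monic_diag k D" "i < dim_row D" "j < dim_col D" "i \<noteq> j \<or> k \<le> i"
  shows "D $$ (i, j) = 0"
proof (rule ccontr)
  assume "D $$ (i, j) \<noteq> 0"
  with assms(1-3) have "i = j \<and> i < k" unfolding monic_diag_def by blast
  with assms(4) show False by simp
qed

lemma first_column_elimination:
  assumes A: "A \<in> carrier_mat a b" and "0 < a" "0 < b" and dvd: "\<forall>i < a. A $$ (0, 0) dvd A $$ (i, 0)"
  shows "\<exists>B. unimod_equiv A B \<and> (\<forall>j < b. B $$ (0, j) = A $$ (0, j)) \<and>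
    (\<forall>i. 0 < i \<and> i < a \<longrightarrow> B $$ (i, 0) = 0)"
proof -
  define q where "q i = (if i = 0 then 0 else A $$ (i, 0) div A $$ (0, 0))" for i
  define L where "L = mat a a (\<lambda>(i, j). (if i = j then 1 else 0) - (if j = 0 then q i else 0))"
  have L: "L \<in> carrier_mat a a" by (simp add: L_def)
  have "det L = prod_list (diag_mat L)"
    by (rule det_lower_triangular[OF _ L]) (simp add: L_def)
  also have "\<dots> = 1" by (simp add: prod_list_diag_prod L_def q_def cong: if_cong)
  finally have "unimodular L" using L by (simp add: unimodular_def)
  have LA: "(L * A) $$ (i, j) = A $$ (i, j) - q i * A $$ (0, j)" if "i < a" "j < b" for i j
  proof -
    have "(L * A) $$ (i, j) = (\<Sum>h = 0..<a. L $$ (i, h) * A $$ (h, j))"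
      using that A L by (simp add: scalar_prod_def)
    also have "\<dots> = (\<Sum>h = 0..<a. (if h = i then A $$ (h, j) else 0) - (if h = 0 then q i * A $$ (h, j) else 0))"
      by (rule sum.cong) (use that in \<open>auto simp: L_def algebra_simps\<close>)
    also have "\<dots> = A $$ (i, j) - q i * A $$ (0, j)"
      using that \<open>0 < a\<close> by (simp add: sum_subtractf)
    finally show ?thesis .
  qed
  show ?thesis
  proof (intro exI[of _ "L * A"] conjI allI impI)
    show "unimod_equiv A (L * A)" by (rule unimod_equiv_mult_left[OF L \<open>unimodular L\<close> A])
    show "(L * A) $$ (0, j) = A $$ (0, j)" if "j < b" for j using that \<open>0 < a\<close> by (simp add: LA q_def)
    show "(L * A) $$ (i, 0) = 0" if "0 < i \<and> i < a" for i
      using that dvd \<open>0 < b\<close> LA[of i 0] by (simp add: q_def)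
  qed
qed

lemma unimod_equiv_swaprows:
  assumes "A \<in> carrier_mat a b" "k < a" "l < a"
  shows "unimod_equiv A (swaprows k l A)"
  unfolding swaprows_mat[OF assms]
  by (rule unimod_equiv_mult_left[OF _ unimodular_swaprows_mat[OF assms(2,3)] assms(1)]) simp

lemma unimod_equiv_addrow:
  assumes "A \<in> carrier_mat a b" "k \<noteq> l" "l < a"
  shows "unimod_equiv A (addrow c k l A)"
  unfolding addrow_mat[OF assms(1,3)]
  by (rule unimod_equiv_mult_left[OF _ unimodular_addrow_mat[OF assms(2)] assms(1)]) simp

lemma unimod_equiv_multrow:
  assumes "A \<in> carrier_mat a b" "k < a" "c \<noteq> 0"
  shows "unimod_equiv A (multrow k [:c:] A)"
  unfolding multrow_mat[OF assms(1)]
  by (rule unimod_equiv_mult_left[OF _ unimodular_multrow_mat[OF assms(2,3)] assms(1)]) simp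

lemma pivot_degree_decrease_row:
  assumes A: "A \<in> carrier_mat a b" and "i < a" "0 < b" "A $$ (0, 0) \<noteq> 0"
    and ndvd: "\<not> A $$ (0, 0) dvd A $$ (i, 0)"
  shows "\<exists>B. unimod_equiv A B \<and> B $$ (0, 0) \<noteq> 0 \<and> degree (B $$ (0, 0)) < degree (A $$ (0, 0))"
proof -
  have "i \<noteq> 0" using ndvd by (metis dvd_refl)
  define A1 where "A1 = addrow (- (A $$ (i, 0) div A $$ (0, 0))) i 0 A"
  have A1: "A1 \<in> carrier_mat a b" using A by (simp add: A1_def)
  have "unimod_equiv A A1"
    unfolding A1_def by (rule unimod_equiv_addrow[OF A \<open>i \<noteq> 0\<close>]) (use \<open>i < a\<close> in simp)
  also have "unimod_equiv A1 (swaprows 0 i A1)"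
    by (rule unimod_equiv_swaprows[OF A1]) (use \<open>i < a\<close> in simp_all)
  finally have equiv: "unimod_equiv A (swaprows 0 i A1)" .
  have "swaprows 0 i A1 $$ (0, 0) = A $$ (i, 0) - A $$ (i, 0) div A $$ (0, 0) * A $$ (0, 0)"
    using A \<open>i < a\<close> \<open>0 < b\<close> \<open>i \<noteq> 0\<close> by (simp add: A1_def)
  also have "\<dots> = A $$ (i, 0) mod A $$ (0, 0)" by (rule minus_div_mult_eq_mod)
  finally have corner: "swaprows 0 i A1 $$ (0, 0) = A $$ (i, 0) mod A $$ (0, 0)" .
  show ?thesis
  proof (intro exI[of _ "swaprows 0 i A1"] conjI)
    show "swaprows 0 i A1 $$ (0, 0) \<noteq> 0"
      unfolding corner using ndvd by (simp add: mod_eq_0_iff_dvd)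
    show "degree (swaprows 0 i A1 $$ (0, 0)) < degree (A $$ (0, 0))"
      unfolding corner by (rule degree_mod_less_degree[OF \<open>A $$ (0, 0) \<noteq> 0\<close> ndvd])
  qed (rule equiv)
qed

lemma pivot_degree_decrease_col:
  assumes A: "A \<in> carrier_mat a b" and "j < b" "0 < a" "A $$ (0, 0) \<noteq> 0"
    and ndvd: "\<not> A $$ (0, 0) dvd A $$ (0, j)"
  shows "\<exists>B. unimod_equiv A B \<and> B $$ (0, 0) \<noteq> 0 \<and> degree (B $$ (0, 0)) < degree (A $$ (0, 0))"
proof -
  have At: "transpose_mat A \<in> carrier_mat b a" using A by simp
  obtain B where "unimod_equiv (transpose_mat A) B" "B $$ (0, 0) \<noteq> 0"
    "degree (B $$ (0, 0)) < degree (transpose_mat A $$ (0, 0))"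
    using pivot_degree_decrease_row[OF At \<open>j < b\<close> \<open>0 < a\<close>] assms by auto
  moreover have "B \<in> carrier_mat b a" using unimod_equiv_carrier[OF calculation(1) At] .
  ultimately show ?thesis using assms unimod_equiv_transpose
    by (intro exI[of _ "transpose_mat B"]) auto
qed

lemma pivot_isolation:
  assumes "A \<in> carrier_mat a b" "0 < a" "0 < b" "A $$ (0, 0) \<noteq> 0"
  shows "\<exists>B. unimod_equiv A B \<and> B $$ (0, 0) \<noteq> 0 \<and>
    (\<forall>i. 0 < i \<and> i < a \<longrightarrow> B $$ (i, 0) = 0) \<and> (\<forall>j. 0 < j \<and> j < b \<longrightarrow> B $$ (0, j) = 0)"
  using assms
proof (induction "degree (A $$ (0, 0))" arbitrary: A rule: less_induct)
  case less
  note A = less.prems(1)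
  have smaller_pivot: ?case
    if "unimod_equiv A B" "B $$ (0, 0) \<noteq> 0" "degree (B $$ (0, 0)) < degree (A $$ (0, 0))" for B
    using less.hyps[OF that(3) unimod_equiv_carrier[OF that(1) A] assms(2,3) that(2)]
      unimod_equiv_trans[OF that(1)] by blast
  consider (row) i where "i < a" "\<not> A $$ (0, 0) dvd A $$ (i, 0)"
    | (col) j where "j < b" "\<not> A $$ (0, 0) dvd A $$ (0, j)"
    | (dvd) "\<forall>i < a. A $$ (0, 0) dvd A $$ (i, 0)" "\<forall>j < b. A $$ (0, 0) dvd A $$ (0, j)"
    by blast
  then show ?case
  proof cases
    case row
    then show ?thesis using pivot_degree_decrease_row[OF A] less.prems smaller_pivot by blast
  next
    case col
    then show ?thesis using pivot_degree_decrease_col[OF A] less.prems smaller_pivot by blast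
  next
    case dvd
    obtain A1 where AA1: "unimod_equiv A A1" and row0: "\<forall>j < b. A1 $$ (0, j) = A $$ (0, j)"
      and col0: "\<forall>i. 0 < i \<and> i < a \<longrightarrow> A1 $$ (i, 0) = 0"
      using first_column_elimination[OF A assms(2,3) dvd(1)] by blast
    have A1: "A1 \<in> carrier_mat a b" by (rule unimod_equiv_carrier[OF AA1 A])
    have A1t: "transpose_mat A1 \<in> carrier_mat b a" using A1 by simp
    have "\<forall>j < b. transpose_mat A1 $$ (0, 0) dvd transpose_mat A1 $$ (j, 0)"
      using dvd(2) row0 A1 assms(2,3) by simp
    then obtain B where A1B: "unimod_equiv (transpose_mat A1) B"
      and B0: "\<forall>i < a. B $$ (0, i) = transpose_mat A1 $$ (0, i)"
      and Bcol: "\<forall>j. 0 < j \<and> j < b \<longrightarrow> B $$ (j, 0) = 0"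
      using first_column_elimination[OF A1t assms(3,2)] by blast
    have B: "B \<in> carrier_mat b a" by (rule unimod_equiv_carrier[OF A1B A1t])
    show ?thesis
    proof (intro exI[of _ "transpose_mat B"] conjI allI impI)
      show "unimod_equiv A (transpose_mat B)"
        by (rule unimod_equiv_trans[OF AA1 unimod_equiv_transpose[OF A1B]])
      show "transpose_mat B $$ (0, 0) \<noteq> 0"
        using B B0 row0 A1 less.prems by simp
      show "transpose_mat B $$ (i, 0) = 0" if "0 < i \<and> i < a" for i
        using that B B0 col0 A1 assms(3) by simp
      show "transpose_mat B $$ (0, j) = 0" if "0 < j \<and> j < b" for j
        using that B Bcol assms(2) by simp
    qed
  qed
qed

lemma monic_pivot:
  assumes A: "A \<in> carrier_mat a b" and "i0 < a" "j0 < b" "A $$ (i0, j0) \<noteq> 0"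
  shows "\<exists>B. unimod_equiv A B \<and> monic (B $$ (0, 0)) \<and>
    (\<forall>i. 0 < i \<and> i < a \<longrightarrow> B $$ (i, 0) = 0) \<and> (\<forall>j. 0 < j \<and> j < b \<longrightarrow> B $$ (0, j) = 0)"
proof -
  define A1 where "A1 = swaprows 0 j0 (transpose_mat (swaprows 0 i0 A))"
  have A1: "A1 \<in> carrier_mat b a" using A by (simp add: A1_def)
  have "unimod_equiv (transpose_mat (swaprows 0 i0 A)) A1"
    unfolding A1_def by (rule unimod_equiv_swaprows) (use A \<open>j0 < b\<close> in simp_all)
  then have "unimod_equiv A (transpose_mat A1)"
    using unimod_equiv_trans[OF unimod_equiv_swaprows[OF A, of 0 i0]] unimod_equiv_transpose
      \<open>i0 < a\<close> by fastforce
  moreover have "transpose_mat A1 $$ (0, 0) \<noteq> 0"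
    using A \<open>i0 < a\<close> \<open>j0 < b\<close> \<open>A $$ (i0, j0) \<noteq> 0\<close> by (simp add: A1_def)
  moreover have A1t: "transpose_mat A1 \<in> carrier_mat a b" using A1 by simp
  moreover have "0 < a" "0 < b" using \<open>i0 < a\<close> \<open>j0 < b\<close> by auto
  ultimately obtain B where AB: "unimod_equiv A B" and B: "B $$ (0, 0) \<noteq> 0"
    "\<forall>i. 0 < i \<and> i < a \<longrightarrow> B $$ (i, 0) = 0" "\<forall>j. 0 < j \<and> j < b \<longrightarrow> B $$ (0, j) = 0"
    using pivot_isolation[of "transpose_mat A1" a b] unimod_equiv_trans by blast
  have Bc: "B \<in> carrier_mat a b" by (rule unimod_equiv_carrier[OF AB A])
  define c where "c = 1 / lead_coeff (B $$ (0, 0))"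
  have "c \<noteq> 0" using B(1) by (simp add: c_def)
  have "unimod_equiv B (multrow 0 [:c:] B)"
    by (rule unimod_equiv_multrow[OF Bc _ \<open>c \<noteq> 0\<close>]) (use \<open>i0 < a\<close> in simp)
  moreover have "monic (multrow 0 [:c:] B $$ (0, 0))"
    using Bc B(1) \<open>i0 < a\<close> \<open>j0 < b\<close> by (simp add: c_def monic_def lead_coeff_mult)
  moreover have "multrow 0 [:c:] B $$ (i, 0) = 0" if "0 < i" "i < a" for i
    using that Bc B(2) \<open>j0 < b\<close> by simp
  moreover have "multrow 0 [:c:] B $$ (0, j) = 0" if "0 < j" "j < b" for j
    using that Bc B(3) \<open>i0 < a\<close> by simp
  ultimately show ?thesis
    using unimod_equiv_trans[OF AB] by (intro exI[of _ "multrow 0 [:c:] B"]) blast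
qed

lemma block_diag_mult_four_block:
  assumes "U \<in> carrier_mat k k" "W \<in> carrier_mat e e" "V \<in> carrier_mat c c" "X \<in> carrier_mat t t"
    "A \<in> carrier_mat k c" "B \<in> carrier_mat k t" "C \<in> carrier_mat e c" "D \<in> carrier_mat e t"
  shows "four_block_mat U (0\<^sub>m k e) (0\<^sub>m e k) W * four_block_mat A B C D *
      four_block_mat V (0\<^sub>m c t) (0\<^sub>m t c) X =
    four_block_mat (U * A * V) (U * B * X) (W * C * V) (W * D * X)"
proof -
  have "four_block_mat U (0\<^sub>m k e) (0\<^sub>m e k) W * four_block_mat A B C D =
    four_block_mat (U * A) (U * B) (W * C) (W * D)"
    using assms by (subst mult_four_block_mat[of _ k k _ e _ e]) simp_all
  then show ?thesis
    using assms by (simp add: mult_four_block_mat[of _ k c _ t _ e _ _ c _ t])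
qed

lemma unimod_equiv_block_diag:
  assumes "unimod_equiv A A'" "unimod_equiv D D'" "A \<in> carrier_mat k c" "D \<in> carrier_mat e t"
  shows "unimod_equiv (four_block_mat A (0\<^sub>m k t) (0\<^sub>m e c) D) (four_block_mat A' (0\<^sub>m k t) (0\<^sub>m e c) D')"
proof -
  obtain U V where U: "U \<in> carrier_mat k k" "unimodular U" and V: "V \<in> carrier_mat c c" "unimodular V"
    and A': "A' = U * A * V"
    using assms(1,3) unfolding unimod_equiv_def by auto
  obtain W X where W: "W \<in> carrier_mat e e" "unimodular W" and X: "X \<in> carrier_mat t t" "unimodular X"
    and D': "D' = W * D * X"
    using assms(2,4) unfolding unimod_equiv_def by auto
  have "four_block_mat A' (0\<^sub>m k t) (0\<^sub>m e c) D' =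
    four_block_mat U (0\<^sub>m k e) (0\<^sub>m e k) W * four_block_mat A (0\<^sub>m k t) (0\<^sub>m e c) D *
      four_block_mat V (0\<^sub>m c t) (0\<^sub>m t c) X"
    using U V W X assms(3,4) unfolding A' D' by (subst block_diag_mult_four_block) auto
  then show ?thesis unfolding unimod_equiv_def
    using U V W X assms(3,4) unimodular_block_diag
    by (intro exI[of _ "four_block_mat U (0\<^sub>m k e) (0\<^sub>m e k) W"]
        exI[of _ "four_block_mat V (0\<^sub>m c t) (0\<^sub>m t c) X"]) auto
qed

lemma four_block_split_corner:
  assumes "B \<in> carrier_mat (Suc a) (Suc b)"
    "\<forall>i. 0 < i \<and> i < Suc a \<longrightarrow> B $$ (i, 0) = 0" "\<forall>j. 0 < j \<and> j < Suc b \<longrightarrow> B $$ (0, j) = 0"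
  shows "B = four_block_mat (mat 1 1 (\<lambda>_. B $$ (0, 0))) (0\<^sub>m 1 b) (0\<^sub>m a 1)
    (mat a b (\<lambda>(i, j). B $$ (Suc i, Suc j)))"
  by (rule eq_matI) (use assms in \<open>auto simp: gr0_conv_Suc\<close>)

lemma monic_diag_four_block_corner:
  assumes "monic d" "monic_diag k D" "D \<in> carrier_mat a b"
  shows "monic_diag (Suc k) (four_block_mat (mat 1 1 (\<lambda>_. d)) (0\<^sub>m 1 b) (0\<^sub>m a 1) D)"
  using assms unfolding monic_diag_def
  by (auto simp: less_Suc_eq_0_disj gr0_conv_Suc)

lemma monic_diag_form:
  "A \<in> carrier_mat a b \<Longrightarrow> \<exists>B k. unimod_equiv A B \<and> monic_diag k B"
proof (induction a arbitrary: b A)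
  case 0
  then show ?case by (intro exI[of _ A] exI[of _ 0]) (simp add: unimod_equiv_refl monic_diag_def)
next
  case (Suc a b A)
  show ?case
  proof (cases "\<forall>i < Suc a. \<forall>j < b. A $$ (i, j) = 0")
    case True
    then show ?thesis using Suc.prems
      by (intro exI[of _ A] exI[of _ 0]) (simp add: unimod_equiv_refl monic_diag_def)
  next
    case False
    then obtain i j where ij: "i < Suc a" "j < b" "A $$ (i, j) \<noteq> 0" by blast
    then obtain b' where b: "b = Suc b'" by (cases b) auto
    obtain B where AB: "unimod_equiv A B" and B: "monic (B $$ (0, 0))"
      "\<forall>i. 0 < i \<and> i < Suc a \<longrightarrow> B $$ (i, 0) = 0" "\<forall>j. 0 < j \<and> j < b \<longrightarrow> B $$ (0, j) = 0"
      using monic_pivot[OF Suc.prems ij] by blast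
    have Bc: "B \<in> carrier_mat (Suc a) (Suc b')" using unimod_equiv_carrier[OF AB Suc.prems] b by simp
    define D where "D = mat a b' (\<lambda>(i, j). B $$ (Suc i, Suc j))"
    have D: "D \<in> carrier_mat a b'" by (simp add: D_def)
    obtain D' k where DD': "unimod_equiv D D'" and D': "monic_diag k D'"
      using Suc.IH[OF D] by blast
    let ?d = "mat 1 1 (\<lambda>_. B $$ (0, 0))"
    note AB
    also have "B = four_block_mat ?d (0\<^sub>m 1 b') (0\<^sub>m a 1) D"
      unfolding D_def by (rule four_block_split_corner[OF Bc]) (use B b in auto)
    also have "unimod_equiv \<dots> (four_block_mat ?d (0\<^sub>m 1 b') (0\<^sub>m a 1) D')"
      by (rule unimod_equiv_block_diag[OF unimod_equiv_refl DD' _ D]) simp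
    finally have "unimod_equiv A (four_block_mat ?d (0\<^sub>m 1 b') (0\<^sub>m a 1) D')" .
    moreover have "monic_diag (Suc k) (four_block_mat ?d (0\<^sub>m 1 b') (0\<^sub>m a 1) D')"
      using monic_diag_four_block_corner[OF B(1) D' unimod_equiv_carrier[OF DD' D]] .
    ultimately show ?thesis by blast
  qed
qed

subsection \<open>Simultaneous equivalence of pairs\<close>

definition simult_equiv :: "real poly mat \<Rightarrow> real poly mat \<Rightarrow> real poly mat \<Rightarrow> real poly mat \<Rightarrow> bool" where
  "simult_equiv P Q P' Q' \<longleftrightarrow> (\<exists>U V. U \<in> carrier_mat (dim_row P) (dim_row P) \<and> unimodular U \<and>
     V \<in> carrier_mat (dim_col P) (dim_col P) \<and> unimodular V \<and> P' = U * P * V \<and> Q' = U * Q * V)"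

lemma simult_equivI:
  assumes "P \<in> carrier_mat a b" "U \<in> carrier_mat a a" "unimodular U" "V \<in> carrier_mat b b" "unimodular V"
  shows "simult_equiv P Q (U * P * V) (U * Q * V)"
  using assms unfolding simult_equiv_def by blast

lemma simult_equiv_trans:
  assumes "simult_equiv P Q P1 Q1" "simult_equiv P1 Q1 P2 Q2"
    and P: "P \<in> carrier_mat a b" and Q: "Q \<in> carrier_mat a b"
  shows "simult_equiv P Q P2 Q2"
proof -
  obtain U V where U: "U \<in> carrier_mat a a" "unimodular U" and V: "V \<in> carrier_mat b b" "unimodular V"
    and P1: "P1 = U * P * V" and Q1: "Q1 = U * Q * V"
    using assms(1) P unfolding simult_equiv_def by auto
  have "P1 \<in> carrier_mat a b" using U V P unfolding P1 by simp
  then obtain U' V' where U': "U' \<in> carrier_mat a a" "unimodular U'"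
    and V': "V' \<in> carrier_mat b b" "unimodular V'"
    and P2: "P2 = U' * P1 * V'" and Q2: "Q2 = U' * Q1 * V'"
    using assms(2) unfolding simult_equiv_def by auto
  have "P2 = (U' * U) * P * (V * V')" "Q2 = (U' * U) * Q * (V * V')"
    unfolding P2 Q2 P1 Q1 using two_sided_mult_mult U'(1) U(1) V(1) V'(1) P Q by blast+
  then show ?thesis
    using simult_equivI[OF P mult_carrier_mat[OF U'(1) U(1)] unimodular_mult[OF U'(1) U(1) U'(2) U(2)]
        mult_carrier_mat[OF V(1) V'(1)] unimodular_mult[OF V(1) V'(1) V(2) V'(2)]] by simp
qed

lemma simult_equiv_carrier:
  assumes "simult_equiv P Q P' Q'" "P \<in> carrier_mat a b" "Q \<in> carrier_mat a b"
  shows "P' \<in> carrier_mat a b" "Q' \<in> carrier_mat a b"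
  using assms unfolding simult_equiv_def by auto

lemma simult_equiv_mult_left:
  assumes "U \<in> carrier_mat a a" "unimodular U" "P \<in> carrier_mat a b" "Q \<in> carrier_mat a b"
  shows "simult_equiv P Q (U * P) (U * Q)"
  using simult_equivI[OF assms(3,1,2) one_carrier_mat unimodular_one, of Q] assms by simp

lemma four_block_split:
  assumes "M \<in> carrier_mat (k + e) (c + t)"
  shows "M = four_block_mat (mat k c (\<lambda>(i, j). M $$ (i, j))) (mat k t (\<lambda>(i, j). M $$ (i, c + j)))
    (mat e c (\<lambda>(i, j). M $$ (k + i, j))) (mat e t (\<lambda>(i, j). M $$ (k + i, c + j)))"
  by (rule eq_matI) (use assms in auto)

lemma lower_rows_block_diag_mult:
  fixes U W M V :: "'a :: semiring_1 mat"
  assumes U: "U \<in> carrier_mat k k" and W: "W \<in> carrier_mat e e" and M: "M \<in> carrier_mat (k + e) n"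
    and V: "V \<in> carrier_mat n n" and "i < e" "j < n"
  shows "(four_block_mat U (0\<^sub>m k e) (0\<^sub>m e k) W * M * V) $$ (k + i, j) =
    (W * mat e n (\<lambda>(i, j). M $$ (k + i, j)) * V) $$ (i, j)"
proof -
  have M': "M = four_block_mat (mat k n (\<lambda>(i, j). M $$ (i, j))) (mat k 0 (\<lambda>(i, j). M $$ (i, n + j)))
    (mat e n (\<lambda>(i, j). M $$ (k + i, j))) (mat e 0 (\<lambda>(i, j). M $$ (k + i, n + j)))"
    using four_block_split[of M k e n 0] M by simp
  have V': "V = four_block_mat V (0\<^sub>m n 0) (0\<^sub>m 0 n) (1\<^sub>m 0)"
    by (rule eq_matI) (use V in auto)
  show ?thesis
    apply (subst M', subst V')
    apply (subst block_diag_mult_four_block[OF U W V one_carrier_mat])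
    using assms by simp_all
qed

lemma index_mult_transpose_perm_mat:
  fixes A :: "'a :: comm_semiring_1 mat"
  assumes "A \<in> carrier_mat m n" "i < m" "j < n" "p j < n"
  shows "(A * transpose_mat (perm_mat n p)) $$ (i, j) = A $$ (i, p j)"
proof -
  have "A * transpose_mat (perm_mat n p) = transpose_mat (perm_mat n p * transpose_mat A)"
    using transpose_mult[of "perm_mat n p" n n "transpose_mat A" m] assms(1) by simp
  then have "(A * transpose_mat (perm_mat n p)) $$ (i, j) = (perm_mat n p * transpose_mat A) $$ (j, i)"
    using assms by simp
  also have "\<dots> = transpose_mat A $$ (p j, i)"
    by (rule index_perm_mat_mult) (use assms in simp_all)
  finally show ?thesis using assms by simp
qed

lemma monic_diag_leading_cols:
  assumes "monic_diag t E" "E \<in> carrier_mat e n"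
  shows "monic_diag t (mat e t (\<lambda>(i, j). E $$ (i, j)))"
proof -
  have "t \<le> n" "t \<le> e" using assms unfolding monic_diag_def by auto
  have "i = j \<and> i < t" if "i < e" "j < t" "E $$ (i, j) \<noteq> 0" for i j
  proof -
    have "j < n" using that(2) \<open>t \<le> n\<close> by simp
    then show ?thesis using that(1,3) assms unfolding monic_diag_def by auto
  qed
  then show ?thesis using assms \<open>t \<le> e\<close> unfolding monic_diag_def by auto
qed

lemma lower_rows_reduction:
  assumes B: "B \<in> carrier_mat (k + e) n" and Q: "Q \<in> carrier_mat (k + e) n"
    and B_lower: "\<forall>i < e. \<forall>j < n. B $$ (k + i, j) = 0"
  shows "\<exists>P1 Q1 t. t \<le> n \<and> simult_equiv B Q P1 Q1 \<and>
    (\<forall>i < e. \<forall>j < n. P1 $$ (k + i, j) = 0) \<and> (\<forall>i < e. \<forall>j < n - t. Q1 $$ (k + i, j) = 0) \<and>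
    monic_diag t (mat e t (\<lambda>(i, j). Q1 $$ (k + i, n - t + j)))"
proof -
  define Q2 where "Q2 = mat e n (\<lambda>(i, j). Q $$ (k + i, j))"
  have Q2: "Q2 \<in> carrier_mat e n" by (simp add: Q2_def)
  obtain E t where "unimod_equiv Q2 E" and Ediag: "monic_diag t E"
    using monic_diag_form[OF Q2] by blast
  then obtain W Y where W: "W \<in> carrier_mat e e" "unimodular W" and Y: "Y \<in> carrier_mat n n" "unimodular Y"
    and E: "E = W * Q2 * Y"
    using Q2 unfolding unimod_equiv_def by auto
  have Ec: "E \<in> carrier_mat e n" using W Y Q2 E by simp
  then have "t \<le> n" using Ediag by (simp add: monic_diag_def)
  \<comment> \<open>moves the pivot columns \<open>0, \<dots>, t - 1\<close> of \<open>E\<close> to the end\<close>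
  define \<rho> where "\<rho> j = (if j < n - t then j + t else j - (n - t))" for j
  define R where "R = transpose_mat (perm_mat n \<rho> :: real poly mat)"
  have R: "R \<in> carrier_mat n n" "unimodular R"
    unfolding R_def using \<open>t \<le> n\<close>
    by (auto intro!: unimodular_transpose unimodular_perm_mat[where p' = "\<lambda>j. if j < t then j + (n - t) else j - t"]
        simp: \<rho>_def)
  define L where "L = four_block_mat (1\<^sub>m k) (0\<^sub>m k e) (0\<^sub>m e k) W"
  have L: "L \<in> carrier_mat (k + e) (k + e)" "unimodular L"
    unfolding L_def using W by (auto intro: unimodular_block_diag unimodular_one)
  have YR: "Y * R \<in> carrier_mat n n" "unimodular (Y * R)"
    using Y R unimodular_mult by auto
  have lower: "(L * M * (Y * R)) $$ (k + i, j) = (W * mat e n (\<lambda>(i, j). M $$ (k + i, j)) * (Y * R)) $$ (i, j)"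
    if "M \<in> carrier_mat (k + e) n" "i < e" "j < n" for M i j
    unfolding L_def by (rule lower_rows_block_diag_mult[OF one_carrier_mat W(1) that(1) YR(1) that(2,3)])
  have Q1_lower: "(L * Q * (Y * R)) $$ (k + i, j) = E $$ (i, \<rho> j)" if "i < e" "j < n" for i j
  proof -
    have "W * Q2 * (Y * R) = E * R"
      unfolding E by (rule assoc_mult_mat[of "W * Q2" e n Y n R n, symmetric]) (use W Y R Q2 in auto)
    then have "(L * Q * (Y * R)) $$ (k + i, j) = (E * R) $$ (i, j)"
      unfolding lower[OF Q that] Q2_def[symmetric] by simp
    also have "\<dots> = E $$ (i, \<rho> j)"
      unfolding R_def by (rule index_mult_transpose_perm_mat[OF Ec that]) (use that in \<open>auto simp: \<rho>_def\<close>)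
    finally show ?thesis .
  qed
  show ?thesis
  proof (intro exI conjI allI impI)
    show "simult_equiv B Q (L * B * (Y * R)) (L * Q * (Y * R))"
      by (rule simult_equivI[OF B L YR])
    show "(L * B * (Y * R)) $$ (k + i, j) = 0" if "i < e" "j < n" for i j
    proof -
      have "mat e n (\<lambda>(i, j). B $$ (k + i, j)) = 0\<^sub>m e n"
        by (rule eq_matI) (use B_lower in auto)
      then show ?thesis unfolding lower[OF B that] using W that by (simp add: left_mult_zero_mat[OF YR(1)])
    qed
    show "(L * Q * (Y * R)) $$ (k + i, j) = 0" if "i < e" "j < n - t" for i j
    proof -
      have "E $$ (i, j + t) = 0"
        using monic_diag_entry_zero[OF Ediag, of i "j + t"] Ec that by auto
      then show ?thesis using Q1_lower[of i j] that by (simp add: \<rho>_def)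
    qed
    have "mat e t (\<lambda>(i, j). (L * Q * (Y * R)) $$ (k + i, n - t + j)) = mat e t (\<lambda>(i, j). E $$ (i, j))"
      by (rule eq_matI) (use \<open>t \<le> n\<close> Q1_lower in \<open>auto simp: \<rho>_def\<close>)
    then show "monic_diag t (mat e t (\<lambda>(i, j). (L * Q * (Y * R)) $$ (k + i, n - t + j)))"
      using monic_diag_leading_cols[OF Ediag Ec] by simp
  qed (rule \<open>t \<le> n\<close>)
qed

lemma simult_equiv_upper_left_block:
  assumes P: "P \<in> carrier_mat (k + e) (c + t)" and Q: "Q \<in> carrier_mat (k + e) (c + t)"
    and lower_left: "\<forall>i < e. \<forall>j < c. P $$ (k + i, j) = 0 \<and> Q $$ (k + i, j) = 0"
    and equiv: "simult_equiv (mat k c (\<lambda>(i, j). P $$ (i, j))) (mat k c (\<lambda>(i, j). Q $$ (i, j))) Pr Qr"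
  shows "\<exists>Pb Qb. Pb \<in> carrier_mat k t \<and> Qb \<in> carrier_mat k t \<and>
    simult_equiv P Q (four_block_mat Pr Pb (0\<^sub>m e c) (mat e t (\<lambda>(i, j). P $$ (k + i, c + j))))
      (four_block_mat Qr Qb (0\<^sub>m e c) (mat e t (\<lambda>(i, j). Q $$ (k + i, c + j))))"
proof -
  obtain U V where U: "U \<in> carrier_mat k k" "unimodular U" and V: "V \<in> carrier_mat c c" "unimodular V"
    and Pr: "Pr = U * mat k c (\<lambda>(i, j). P $$ (i, j)) * V"
    and Qr: "Qr = U * mat k c (\<lambda>(i, j). Q $$ (i, j)) * V"
    using equiv unfolding simult_equiv_def by auto
  define L where "L = four_block_mat U (0\<^sub>m k e) (0\<^sub>m e k) (1\<^sub>m e)"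
  define R where "R = four_block_mat V (0\<^sub>m c t) (0\<^sub>m t c) (1\<^sub>m t)"
  have L: "L \<in> carrier_mat (k + e) (k + e)" "unimodular L"
    unfolding L_def using U by (auto intro: unimodular_block_diag unimodular_one)
  have R: "R \<in> carrier_mat (c + t) (c + t)" "unimodular R"
    unfolding R_def using V by (auto intro: unimodular_block_diag unimodular_one)
  have blocks: "L * M * R = four_block_mat (U * mat k c (\<lambda>(i, j). M $$ (i, j)) * V)
      (U * mat k t (\<lambda>(i, j). M $$ (i, c + j))) (0\<^sub>m e c) (mat e t (\<lambda>(i, j). M $$ (k + i, c + j)))"
    if M: "M \<in> carrier_mat (k + e) (c + t)" and zero: "\<forall>i < e. \<forall>j < c. M $$ (k + i, j) = 0" for M
  proof -
    have "mat e c (\<lambda>(i, j). M $$ (k + i, j)) = 0\<^sub>m e c" by (rule eq_matI) (use zero in auto)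
    then have "M = four_block_mat (mat k c (\<lambda>(i, j). M $$ (i, j))) (mat k t (\<lambda>(i, j). M $$ (i, c + j)))
      (0\<^sub>m e c) (mat e t (\<lambda>(i, j). M $$ (k + i, c + j)))"
      using four_block_split[OF M] by simp
    then have "L * M * R = L * four_block_mat (mat k c (\<lambda>(i, j). M $$ (i, j)))
      (mat k t (\<lambda>(i, j). M $$ (i, c + j))) (0\<^sub>m e c) (mat e t (\<lambda>(i, j). M $$ (k + i, c + j))) * R"
      by (rule arg_cong[where f = "\<lambda>M. L * M * R"])
    also have "\<dots> = four_block_mat (U * mat k c (\<lambda>(i, j). M $$ (i, j)) * V)
      (U * mat k t (\<lambda>(i, j). M $$ (i, c + j)) * 1\<^sub>m t) (1\<^sub>m e * 0\<^sub>m e c * V)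
      (1\<^sub>m e * mat e t (\<lambda>(i, j). M $$ (k + i, c + j)) * 1\<^sub>m t)"
      unfolding L_def R_def by (rule block_diag_mult_four_block[OF U(1) one_carrier_mat V(1) one_carrier_mat]) auto
    finally show ?thesis using U V by simp
  qed
  show ?thesis
  proof (intro exI conjI)
    show "simult_equiv P Q (four_block_mat Pr (U * mat k t (\<lambda>(i, j). P $$ (i, c + j))) (0\<^sub>m e c)
        (mat e t (\<lambda>(i, j). P $$ (k + i, c + j))))
      (four_block_mat Qr (U * mat k t (\<lambda>(i, j). Q $$ (i, c + j))) (0\<^sub>m e c)
        (mat e t (\<lambda>(i, j). Q $$ (k + i, c + j))))"
    proof -
      have Pz: "\<forall>i < e. \<forall>j < c. P $$ (k + i, j) = 0" and Qz: "\<forall>i < e. \<forall>j < c. Q $$ (k + i, j) = 0"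
        using lower_left by simp_all
      have "simult_equiv P Q (L * P * R) (L * Q * R)" by (rule simult_equivI[OF P L R])
      then show ?thesis unfolding blocks[OF P Pz] blocks[OF Q Qz] Pr Qr .
    qed
  qed (use U in auto)
qed

subsection \<open>The normal form\<close>

text \<open>Conditions (a) and (b) of the theorem, with the union of the column groups
  \<open>C_P, C_0, C_1, \<dots>, C_b\<close> written as the initial segment \<open>{..<rP + m + r_1 + \<dots> + r_b}\<close>
  (see \<open>column_groups_prefix\<close>).\<close>

definition normal_form_P :: "nat \<Rightarrow> nat \<Rightarrow> nat \<Rightarrow> (nat \<Rightarrow> nat) \<Rightarrow> (nat \<Rightarrow> nat) \<Rightarrow> real poly mat \<Rightarrow> bool"
  where "normal_form_P rP m q r s X \<longleftrightarrow>
    diag_monic_block X 0 0 rP \<and> block_zero X (rowP rP) (col0 rP m) \<and>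
    (\<forall>a<q. block_zero X (rowR rP r a \<union> rowS rP r q s a) {..<rP + m + (\<Sum>i<Suc a. r i)})"

definition normal_form_Q :: "nat \<Rightarrow> nat \<Rightarrow> nat \<Rightarrow> (nat \<Rightarrow> nat) \<Rightarrow> (nat \<Rightarrow> nat) \<Rightarrow> real poly mat \<Rightarrow> bool"
  where "normal_form_Q rP m q r s Y \<longleftrightarrow>
    (\<forall>a<q. block_zero Y (rowR rP r a) {..<rP + m + (\<Sum>i<a. r i)}) \<and>
    (\<forall>a<q. diag_monic_block Y (rP + (\<Sum>i<a. r i)) (rP + m + (\<Sum>i<a. r i)) (r a)) \<and>
    (\<forall>a<q. block_zero Y (rowS rP r q s a) {..<rP + m + (\<Sum>i<Suc a. r i)})"

definition normal_form :: "nat \<Rightarrow> nat \<Rightarrow> real poly mat \<Rightarrow> real poly mat \<Rightarrow> nat \<Rightarrow> nat \<Rightarrow> nat \<Rightarrow>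
    (nat \<Rightarrow> nat) \<Rightarrow> (nat \<Rightarrow> nat) \<Rightarrow> bool" where
  "normal_form l n X Y rP m q r s \<longleftrightarrow>
    rP + m + (\<Sum>a<q. r a) = n \<and> rP + (\<Sum>a<q. r a) + (\<Sum>a<q. s a) = l \<and>
    normal_form_P rP m q r s X \<and> normal_form_Q rP m q r s Y"

lemma column_groups_prefix:
  "colP rP \<union> col0 rP m \<union> (\<Union>b\<in>{..<a}. colC rP m r b) = {..<rP + m + (\<Sum>i<a. r i)}"
proof (induction a)
  case 0
  show ?case by (simp add: colP_def col0_def atLeast0LessThan ivl_disj_un_one(2))
next
  case (Suc a)
  have "colP rP \<union> col0 rP m \<union> (\<Union>b\<in>{..<Suc a}. colC rP m r b) =
    (colP rP \<union> col0 rP m \<union> (\<Union>b\<in>{..<a}. colC rP m r b)) \<union> colC rP m r a"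
    by (auto simp: lessThan_Suc)
  also have "\<dots> = {..<rP + m + (\<Sum>i<a. r i)} \<union> colC rP m r a" by (simp only: Suc.IH)
  also have "\<dots> = {..<rP + m + (\<Sum>i<Suc a. r i)}"
    unfolding colC_def by (rule ivl_disj_un_one(2)) simp
  finally show ?case .
qed

lemma normal_form_without_groups:
  assumes "monic_diag l X" "X \<in> carrier_mat l n"
  shows "normal_form l n X Y l (n - l) 0 r s"
proof -
  have "l \<le> n" and monic: "\<forall>i < l. monic (X $$ (i, i))"
    using assms unfolding monic_diag_def by auto
  have "X $$ (i, j) = 0" if "i < l" "j < n" "i \<noteq> j" for i j
    using monic_diag_entry_zero[OF assms(1)] assms(2) that by simp
  then show ?thesis
    unfolding normal_form_def normal_form_P_def normal_form_Q_def diag_monic_block_def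
      block_zero_def rowP_def col0_def
    using monic \<open>l \<le> n\<close> by auto
qed

lemma sum_lessThan_fun_upd:
  fixes a q :: nat
  assumes "a \<le> q" shows "(\<Sum>i<a. (f(q := v)) i) = (\<Sum>i<a. f i)"
  using assms by (intro sum.cong) auto

lemma sum_lessThan_Suc_fun_upd: "(\<Sum>i<Suc q. (f(q := v)) i) = (\<Sum>i<q. f i) + v"
  by (simp add: sum_lessThan_fun_upd)

lemma sum_lessThan_Suc_le:
  fixes f :: "nat \<Rightarrow> nat"
  assumes "a < q" shows "(\<Sum>i<Suc a. f i) \<le> (\<Sum>i<q. f i)"
  using assms by (intro sum_mono2) auto

lemma rowR_fun_upd: "a < q \<Longrightarrow> rowR rP (r(q := t)) a = rowR rP r a"
  unfolding rowR_def by (simp add: sum_lessThan_fun_upd del: sum.lessThan_Suc)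

lemma rowR_fun_upd_last: "rowR rP (r(q := t)) q = {rP + (\<Sum>i<q. r i)..<rP + (\<Sum>i<q. r i) + t}"
  unfolding rowR_def sum_lessThan_Suc_fun_upd by (simp add: sum_lessThan_fun_upd add.assoc)

lemma rowR_bound: "a < q \<Longrightarrow> i \<in> rowR rP r a \<Longrightarrow> i < rP + (\<Sum>i<q. r i)"
  unfolding rowR_def using sum_lessThan_Suc_le[of a q r] by (auto simp del: sum.lessThan_Suc)

lemma rowS_fun_upd:
  assumes "a < q"
  shows "rowS rP (r(q := t)) (Suc q) (s(q := v)) a = (+) t ` rowS rP r q s a"
  using assms unfolding rowS_def sum_lessThan_Suc_fun_upd
  by (simp add: sum_lessThan_fun_upd algebra_simps del: sum.lessThan_Suc)

lemma rowS_fun_upd_last: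
  "rowS rP (r(q := t)) (Suc q) (s(q := v)) q =
    {rP + (\<Sum>i<q. r i) + (\<Sum>i<q. s i) + t..<rP + (\<Sum>i<q. r i) + (\<Sum>i<q. s i) + t + v}"
  unfolding rowS_def sum_lessThan_Suc_fun_upd by (simp add: sum_lessThan_fun_upd algebra_simps)

lemma rowS_bound:
  assumes "a < q" "i \<in> rowS rP r q s a"
  shows "rP + (\<Sum>i<q. r i) \<le> i \<and> i < rP + (\<Sum>i<q. r i) + (\<Sum>i<q. s i)"
  using assms sum_lessThan_Suc_le[of a q s] unfolding rowS_def by (auto simp del: sum.lessThan_Suc)

text \<open>Multiplying by \<open>perm_mat n (block_rotation a k t)\<close> moves the rows \<open>k, \<dots>, k + t - 1\<close>
  up to \<open>a, \<dots>, a + t - 1\<close> and the rows \<open>a, \<dots>, k - 1\<close> down by \<open>t\<close>.\<close>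

definition block_rotation :: "nat \<Rightarrow> nat \<Rightarrow> nat \<Rightarrow> nat \<Rightarrow> nat" where
  "block_rotation a k t p = (if p < a \<or> k + t \<le> p then p else if p < a + t then k + (p - a) else p - t)"

lemma unimodular_block_rotation:
  assumes "a \<le> k" "k + t \<le> n"
  shows "unimodular (perm_mat n (block_rotation a k t) :: real poly mat)"
  by (rule unimodular_perm_mat[where p' = "\<lambda>p. if p < a \<or> k + t \<le> p then p else if p < k then p + t else a + (p - k)"])
    (use assms in \<open>auto simp: block_rotation_def\<close>)

lemma index_block_rotation_mult:
  assumes "M \<in> carrier_mat (k + e) n" "a \<le> k" "t \<le> e" "p < k + e" "j < n"
  shows "(perm_mat (k + e) (block_rotation a k t) * M) $$ (p, j) = M $$ (block_rotation a k t p, j)"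
proof (rule index_perm_mat_mult[OF assms(1,4,5)])
  show "block_rotation a k t p < k + e"
    using assms(2-4) unfolding block_rotation_def by auto
qed

lemma normal_form_P_extend:
  assumes nf: "normal_form_P rP m q r s Xr" and Xr: "Xr \<in> carrier_mat k c" and Xb: "Xb \<in> carrier_mat k t"
    and k: "rP + (\<Sum>i<q. r i) + (\<Sum>i<q. s i) = k" and c: "rP + m + (\<Sum>i<q. r i) = c" and "t \<le> e"
  shows "normal_form_P rP m (Suc q) (r(q := t)) (s(q := e - t))
    (perm_mat (k + e) (block_rotation (rP + (\<Sum>i<q. r i)) k t) * four_block_mat Xr Xb (0\<^sub>m e c) (0\<^sub>m e t))"
proof -
  define A0 where "A0 = rP + (\<Sum>i<q. r i)"
  define X' where "X' = perm_mat (k + e) (block_rotation A0 k t) * four_block_mat Xr Xb (0\<^sub>m e c) (0\<^sub>m e t)"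
  have X: "four_block_mat Xr Xb (0\<^sub>m e c) (0\<^sub>m e t) \<in> carrier_mat (k + e) (c + t)" using Xr Xb by auto
  have "A0 \<le> k" using k unfolding A0_def by simp
  note entry = index_block_rotation_mult[OF X \<open>A0 \<le> k\<close> \<open>t \<le> e\<close>, folded X'_def]
  have upper: "X' $$ (p, j) = Xr $$ (p, j)" if "p < A0" "j < c" for p j
    using entry[of p j] that \<open>A0 \<le> k\<close> Xr Xb by (simp add: block_rotation_def)
  have shifted: "X' $$ (p, j) = Xr $$ (p - t, j)" if "A0 + t \<le> p" "p < k + t" "j < c" for p j
  proof -
    have "p - t < k" using that by simp
    then show ?thesis using entry[of p j] that \<open>t \<le> e\<close> Xr Xb by (simp add: block_rotation_def)
  qed
  have new: "X' $$ (p, j) = 0" if "A0 \<le> p" "p < A0 + t \<or> k + t \<le> p" "p < k + e" "j < c + t" for p j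
    using entry[of p j] that \<open>A0 \<le> k\<close> \<open>t \<le> e\<close> Xr Xb by (auto simp: block_rotation_def)
  obtain nf_diag: "diag_monic_block Xr 0 0 rP" and nf_P: "block_zero Xr (rowP rP) (col0 rP m)"
    and nf_groups: "\<forall>a<q. block_zero Xr (rowR rP r a \<union> rowS rP r q s a) {..<rP + m + (\<Sum>i<Suc a. r i)}"
    using nf unfolding normal_form_P_def by blast
  have "diag_monic_block X' 0 0 rP"
    using nf_diag upper c unfolding diag_monic_block_def A0_def by auto
  moreover have "block_zero X' (rowP rP) (col0 rP m)"
    using nf_P upper c unfolding block_zero_def rowP_def col0_def A0_def by auto
  moreover have "block_zero X' (rowR rP (r(q := t)) a \<union> rowS rP (r(q := t)) (Suc q) (s(q := e - t)) a)
    {..<rP + m + (\<Sum>i<Suc a. (r(q := t)) i)}" if "a < Suc q" for a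
  proof (cases "a < q")
    case True
    have cols: "{..<rP + m + (\<Sum>i<Suc a. (r(q := t)) i)} = {..<rP + m + (\<Sum>i<Suc a. r i)}"
      using True by (simp add: sum_lessThan_fun_upd del: sum.lessThan_Suc)
    have bound: "rP + m + (\<Sum>i<Suc a. r i) \<le> c" using sum_lessThan_Suc_le[OF True, of r] c by simp
    show ?thesis
      unfolding block_zero_def cols rowR_fun_upd[OF True] rowS_fun_upd[OF True]
    proof (intro ballI)
      fix i j assume i: "i \<in> rowR rP r a \<union> (+) t ` rowS rP r q s a"
        and j: "j \<in> {..<rP + m + (\<Sum>i<Suc a. r i)}"
      have zero: "Xr $$ (i', j) = 0" if "i' \<in> rowR rP r a \<union> rowS rP r q s a" for i'
        using nf_groups True that j unfolding block_zero_def by blast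
      from i show "X' $$ (i, j) = 0"
      proof
        assume "i \<in> rowR rP r a"
        then show ?thesis using upper[of i j] rowR_bound[OF True] zero j bound unfolding A0_def by auto
      next
        assume "i \<in> (+) t ` rowS rP r q s a"
        then obtain i' where "i' \<in> rowS rP r q s a" "i = t + i'" by blast
        then show ?thesis using shifted[of i j] rowS_bound[OF True] zero j bound k unfolding A0_def by auto
      qed
    qed
  next
    case False
    then have "a = q" using that by simp
    show ?thesis
      using new c k \<open>t \<le> e\<close>
      unfolding \<open>a = q\<close> block_zero_def rowR_fun_upd_last rowS_fun_upd_last sum_lessThan_Suc_fun_upd A0_def
      by auto
  qed
  ultimately show ?thesis unfolding normal_form_P_def X'_def A0_def by blast
qed

lemma normal_form_Q_extend:
  assumes nf: "normal_form_Q rP m q r s Yr" and Yr: "Yr \<in> carrier_mat k c" and Yb: "Yb \<in> carrier_mat k t"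
    and E: "E \<in> carrier_mat e t" "monic_diag t E"
    and k: "rP + (\<Sum>i<q. r i) + (\<Sum>i<q. s i) = k" and c: "rP + m + (\<Sum>i<q. r i) = c"
  shows "normal_form_Q rP m (Suc q) (r(q := t)) (s(q := e - t))
    (perm_mat (k + e) (block_rotation (rP + (\<Sum>i<q. r i)) k t) * four_block_mat Yr Yb (0\<^sub>m e c) E)"
proof -
  define A0 where "A0 = rP + (\<Sum>i<q. r i)"
  define Y' where "Y' = perm_mat (k + e) (block_rotation A0 k t) * four_block_mat Yr Yb (0\<^sub>m e c) E"
  have Y: "four_block_mat Yr Yb (0\<^sub>m e c) E \<in> carrier_mat (k + e) (c + t)" using Yr Yb E by auto
  have "A0 \<le> k" using k unfolding A0_def by simp
  have "t \<le> e" using E unfolding monic_diag_def by simp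
  note entry = index_block_rotation_mult[OF Y \<open>A0 \<le> k\<close> \<open>t \<le> e\<close>, folded Y'_def]
  have upper: "Y' $$ (p, j) = Yr $$ (p, j)" if "p < A0" "j < c" for p j
    using entry[of p j] that \<open>A0 \<le> k\<close> Yr Yb E by (simp add: block_rotation_def)
  have shifted: "Y' $$ (p, j) = Yr $$ (p - t, j)" if "A0 + t \<le> p" "p < k + t" "j < c" for p j
  proof -
    have "p - t < k" using that by simp
    then show ?thesis using entry[of p j] that \<open>t \<le> e\<close> Yr Yb E by (simp add: block_rotation_def)
  qed
  have new: "Y' $$ (p, j) = (if j < c then 0 else E $$ (p - A0, j - c))"
    if "A0 \<le> p" "p < A0 + t" "j < c + t" for p j
    using entry[of p j] that \<open>A0 \<le> k\<close> \<open>t \<le> e\<close> Yr Yb E by (auto simp: block_rotation_def)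
  have lowest: "Y' $$ (p, j) = 0" if "k + t \<le> p" "p < k + e" "j < c + t" for p j
    using entry[of p j] that Yr Yb E monic_diag_entry_zero[OF E(2), of "p - k" "j - c"]
    by (auto simp: block_rotation_def)
  obtain nf_R: "\<forall>a<q. block_zero Yr (rowR rP r a) {..<rP + m + (\<Sum>i<a. r i)}"
    and nf_diag: "\<forall>a<q. diag_monic_block Yr (rP + (\<Sum>i<a. r i)) (rP + m + (\<Sum>i<a. r i)) (r a)"
    and nf_S: "\<forall>a<q. block_zero Yr (rowS rP r q s a) {..<rP + m + (\<Sum>i<Suc a. r i)}"
    using nf unfolding normal_form_Q_def by blast
  have "block_zero Y' (rowR rP (r(q := t)) a) {..<rP + m + (\<Sum>i<a. (r(q := t)) i)}" if "a < Suc q" for a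
  proof (cases "a < q")
    case True
    have "(\<Sum>i<a. r i) \<le> (\<Sum>i<q. r i)" using True by (intro sum_mono2) auto
    then have "rP + m + (\<Sum>i<a. r i) \<le> c" using c by simp
    then show ?thesis
      using True nf_R rowR_bound[OF True] upper
      unfolding block_zero_def rowR_fun_upd[OF True] A0_def by (auto simp: sum_lessThan_fun_upd)
  next
    case False
    then have "a = q" using that by simp
    show ?thesis
      using new c unfolding \<open>a = q\<close> block_zero_def rowR_fun_upd_last A0_def
      by (simp add: sum_lessThan_fun_upd)
  qed
  moreover have "diag_monic_block Y' (rP + (\<Sum>i<a. (r(q := t)) i)) (rP + m + (\<Sum>i<a. (r(q := t)) i))
    ((r(q := t)) a)" if "a < Suc q" for a
  proof (cases "a < q")
    case True
    have "rP + (\<Sum>i<a. r i) + x < A0" "rP + m + (\<Sum>i<a. r i) + x < c" if "x < r a" for x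
      using that sum_lessThan_Suc_le[OF True, of r] c unfolding A0_def by auto
    then show ?thesis
      using True nf_diag upper unfolding diag_monic_block_def by (auto simp: sum_lessThan_fun_upd)
  next
    case False
    then have "a = q" using that by simp
    have "E $$ (x, y) = 0" if "x < t" "y < t" "x \<noteq> y" for x y
      using monic_diag_entry_zero[OF E(2)] E(1) that \<open>t \<le> e\<close> by simp
    moreover have "Y' $$ (A0 + x, c + y) = E $$ (x, y)" if "x < t" "y < t" for x y
      using new[of "A0 + x" "c + y"] that by simp
    ultimately show ?thesis
      using E(2) c unfolding \<open>a = q\<close> diag_monic_block_def monic_diag_def A0_def
      by (simp add: sum_lessThan_fun_upd add.assoc)
  qed
  moreover have "block_zero Y' (rowS rP (r(q := t)) (Suc q) (s(q := e - t)) a)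
    {..<rP + m + (\<Sum>i<Suc a. (r(q := t)) i)}" if "a < Suc q" for a
  proof (cases "a < q")
    case True
    have cols: "{..<rP + m + (\<Sum>i<Suc a. (r(q := t)) i)} = {..<rP + m + (\<Sum>i<Suc a. r i)}"
      using True by (simp add: sum_lessThan_fun_upd del: sum.lessThan_Suc)
    have "rP + m + (\<Sum>i<Suc a. r i) \<le> c" using sum_lessThan_Suc_le[OF True, of r] c by simp
    then show ?thesis
      using True nf_S rowS_bound[OF True] shifted k
      unfolding block_zero_def cols rowS_fun_upd[OF True] A0_def by force
  next
    case False
    then have "a = q" using that by simp
    show ?thesis
      using lowest c k \<open>t \<le> e\<close>
      unfolding \<open>a = q\<close> block_zero_def rowS_fun_upd_last sum_lessThan_Suc_fun_upd A0_def
      by auto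
  qed
  ultimately show ?thesis unfolding normal_form_Q_def Y'_def A0_def by blast
qed

lemma normal_form_extend:
  assumes nf: "normal_form k c Xr Yr rP m q r s"
    and "Xr \<in> carrier_mat k c" "Yr \<in> carrier_mat k c" "Xb \<in> carrier_mat k t" "Yb \<in> carrier_mat k t"
    and E: "E \<in> carrier_mat e t" "monic_diag t E"
  defines "\<sigma> \<equiv> block_rotation (rP + (\<Sum>i<q. r i)) k t"
  shows "normal_form (k + e) (c + t)
      (perm_mat (k + e) \<sigma> * four_block_mat Xr Xb (0\<^sub>m e c) (0\<^sub>m e t))
      (perm_mat (k + e) \<sigma> * four_block_mat Yr Yb (0\<^sub>m e c) E) rP m (Suc q) (r(q := t)) (s(q := e - t))"
proof -
  have k: "rP + (\<Sum>i<q. r i) + (\<Sum>i<q. s i) = k" and c: "rP + m + (\<Sum>i<q. r i) = c"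
    and "normal_form_P rP m q r s Xr" "normal_form_Q rP m q r s Yr"
    using nf unfolding normal_form_def by auto
  moreover have "t \<le> e" using E unfolding monic_diag_def by simp
  ultimately show ?thesis
    using assms normal_form_P_extend normal_form_Q_extend
    unfolding normal_form_def by (simp add: sum_lessThan_fun_upd)
qed

lemma normal_form_from_upper_left:
  assumes P1: "P1 \<in> carrier_mat (k + e) (c + t)" and Q1: "Q1 \<in> carrier_mat (k + e) (c + t)"
    and P1_lower: "\<forall>i < e. \<forall>j < c + t. P1 $$ (k + i, j) = 0"
    and Q1_lower: "\<forall>i < e. \<forall>j < c. Q1 $$ (k + i, j) = 0"
    and E_diag: "monic_diag t (mat e t (\<lambda>(i, j). Q1 $$ (k + i, c + j)))"
    and upper_left: "\<exists>P' Q' rP m q r s. simult_equiv (mat k c (\<lambda>(i, j). P1 $$ (i, j)))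
      (mat k c (\<lambda>(i, j). Q1 $$ (i, j))) P' Q' \<and> normal_form k c P' Q' rP m q r s"
  shows "\<exists>P' Q' rP m q r s. simult_equiv P1 Q1 P' Q' \<and> normal_form (k + e) (c + t) P' Q' rP m q r s"
proof -
  obtain Pr Qr rP m q r s
    where upper: "simult_equiv (mat k c (\<lambda>(i, j). P1 $$ (i, j))) (mat k c (\<lambda>(i, j). Q1 $$ (i, j))) Pr Qr"
      and nf: "normal_form k c Pr Qr rP m q r s"
    using upper_left by blast
  have Pr: "Pr \<in> carrier_mat k c" and Qr: "Qr \<in> carrier_mat k c"
    using simult_equiv_carrier[OF upper] by auto
  define E where "E = mat e t (\<lambda>(i, j). Q1 $$ (k + i, c + j))"
  have E: "E \<in> carrier_mat e t" by (simp add: E_def)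
  obtain Pb Qb where Pb: "Pb \<in> carrier_mat k t" and Qb: "Qb \<in> carrier_mat k t"
    and blocks: "simult_equiv P1 Q1 (four_block_mat Pr Pb (0\<^sub>m e c) (mat e t (\<lambda>(i, j). P1 $$ (k + i, c + j))))
      (four_block_mat Qr Qb (0\<^sub>m e c) E)"
    using simult_equiv_upper_left_block[OF P1 Q1 _ upper] P1_lower Q1_lower unfolding E_def by auto
  have "mat e t (\<lambda>(i, j). P1 $$ (k + i, c + j)) = 0\<^sub>m e t"
    by (rule eq_matI) (use P1_lower in auto)
  with blocks have blocks': "simult_equiv P1 Q1 (four_block_mat Pr Pb (0\<^sub>m e c) (0\<^sub>m e t))
      (four_block_mat Qr Qb (0\<^sub>m e c) E)" by simp
  define \<sigma> where "\<sigma> = block_rotation (rP + (\<Sum>i<q. r i)) k t"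
  have "rP + (\<Sum>i<q. r i) \<le> k" "t \<le> e"
    using nf E_diag unfolding normal_form_def monic_diag_def by auto
  then have "unimodular (perm_mat (k + e) \<sigma> :: real poly mat)"
    unfolding \<sigma>_def by (intro unimodular_block_rotation) simp_all
  then have "simult_equiv (four_block_mat Pr Pb (0\<^sub>m e c) (0\<^sub>m e t)) (four_block_mat Qr Qb (0\<^sub>m e c) E)
      (perm_mat (k + e) \<sigma> * four_block_mat Pr Pb (0\<^sub>m e c) (0\<^sub>m e t))
      (perm_mat (k + e) \<sigma> * four_block_mat Qr Qb (0\<^sub>m e c) E)"
    using Pr Qr Pb Qb E by (intro simult_equiv_mult_left) auto
  then have "simult_equiv P1 Q1 (perm_mat (k + e) \<sigma> * four_block_mat Pr Pb (0\<^sub>m e c) (0\<^sub>m e t))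
      (perm_mat (k + e) \<sigma> * four_block_mat Qr Qb (0\<^sub>m e c) E)"
    by (rule simult_equiv_trans[OF blocks' _ P1 Q1])
  moreover have "normal_form (k + e) (c + t)
      (perm_mat (k + e) \<sigma> * four_block_mat Pr Pb (0\<^sub>m e c) (0\<^sub>m e t))
      (perm_mat (k + e) \<sigma> * four_block_mat Qr Qb (0\<^sub>m e c) E) rP m (Suc q) (r(q := t)) (s(q := e - t))"
    unfolding \<sigma>_def by (rule normal_form_extend[OF nf Pr Qr Pb Qb E]) (use E_diag in \<open>simp add: E_def\<close>)
  ultimately show ?thesis by blast
qed

lemma normal_form_exists:
  "P \<in> carrier_mat l n \<Longrightarrow> Q \<in> carrier_mat l n \<Longrightarrow>
    \<exists>P' Q' rP m q r s. simult_equiv P Q P' Q' \<and> normal_form l n P' Q' rP m q r s"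
proof (induction l arbitrary: n P Q rule: less_induct)
  case (less l n P Q)
  note P = less.prems(1) and Q = less.prems(2)
  obtain B k where PB: "unimod_equiv P B" and B: "monic_diag k B"
    using monic_diag_form[OF P] by blast
  obtain U V where U: "U \<in> carrier_mat l l" "unimodular U" and V: "V \<in> carrier_mat n n" "unimodular V"
    and B_eq: "B = U * P * V"
    using PB P unfolding unimod_equiv_def by auto
  define Q0 where "Q0 = U * Q * V"
  have Bc: "B \<in> carrier_mat l n" and Q0: "Q0 \<in> carrier_mat l n"
    using U V P Q unfolding B_eq Q0_def by auto
  have PQ_B: "simult_equiv P Q B Q0"
    unfolding B_eq Q0_def by (rule simult_equivI[OF P U V])
  have "k \<le> l" using B Bc unfolding monic_diag_def by simp
  show ?case
  proof (cases "k = l")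
    case True
    then show ?thesis using PQ_B normal_form_without_groups[of l B n] B Bc by blast
  next
    case False
    define e where "e = l - k"
    have "k < l" and l: "l = k + e" using False \<open>k \<le> l\<close> unfolding e_def by auto
    have "\<forall>i < e. \<forall>j < n. B $$ (k + i, j) = 0"
      using Bc unfolding l by (auto intro!: monic_diag_entry_zero[OF B])
    then obtain P1 Q1 t where "t \<le> n" and BP1: "simult_equiv B Q0 P1 Q1"
      and P1_lower: "\<forall>i < e. \<forall>j < n. P1 $$ (k + i, j) = 0"
      and Q1_lower: "\<forall>i < e. \<forall>j < n - t. Q1 $$ (k + i, j) = 0"
      and E_diag: "monic_diag t (mat e t (\<lambda>(i, j). Q1 $$ (k + i, n - t + j)))"
      using lower_rows_reduction[of B k e n Q0] Bc Q0 unfolding l by blast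
    define c where "c = n - t"
    have n: "n = c + t" using \<open>t \<le> n\<close> unfolding c_def by simp
    have P1: "P1 \<in> carrier_mat (k + e) (c + t)" and Q1: "Q1 \<in> carrier_mat (k + e) (c + t)"
      using simult_equiv_carrier[OF BP1 Bc Q0] unfolding l n by auto
    have "\<forall>i < e. \<forall>j < c + t. P1 $$ (k + i, j) = 0" "\<forall>i < e. \<forall>j < c. Q1 $$ (k + i, j) = 0"
      "monic_diag t (mat e t (\<lambda>(i, j). Q1 $$ (k + i, c + j)))"
      using P1_lower Q1_lower E_diag \<open>t \<le> n\<close> unfolding c_def by simp_all
    moreover have "\<exists>P' Q' rP m q r s. simult_equiv (mat k c (\<lambda>(i, j). P1 $$ (i, j)))
      (mat k c (\<lambda>(i, j). Q1 $$ (i, j))) P' Q' \<and> normal_form k c P' Q' rP m q r s"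
      by (rule less.IH[OF \<open>k < l\<close>]) simp_all
    ultimately have "\<exists>P' Q' rP m q r s. simult_equiv P1 Q1 P' Q' \<and> normal_form (k + e) (c + t) P' Q' rP m q r s"
      by (rule normal_form_from_upper_left[OF P1 Q1])
    then show ?thesis
      using simult_equiv_trans[OF PQ_B simult_equiv_trans[OF BP1 _ Bc Q0] P Q] unfolding l n by blast
  qed
qed

theorem theorem1:
  fixes P Q :: "real poly mat" and l n :: nat
  assumes "P \<in> carrier_mat l n" and "Q \<in> carrier_mat l n"
  shows "\<exists>U V rP m q (r :: nat \<Rightarrow> nat) (s :: nat \<Rightarrow> nat).
    U \<in> carrier_mat l l \<and> unimodular U \<and> V \<in> carrier_mat n n \<and> unimodular V \<and>
    rP + m + (\<Sum>a<q. r a) = n \<and> rP + (\<Sum>a<q. r a) + (\<Sum>a<q. s a) = l \<and>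
    diag_monic_block (U * P * V) 0 0 rP \<and>
    block_zero (U * P * V) (rowP rP) (col0 rP m) \<and>
    (\<forall>a<q. block_zero (U * P * V) (rowR rP r a \<union> rowS rP r q s a)
              (colP rP \<union> col0 rP m \<union> (\<Union>b\<in>{..a}. colC rP m r b))) \<and>
    (\<forall>a<q. block_zero (U * Q * V) (rowR rP r a)
              (colP rP \<union> col0 rP m \<union> (\<Union>b\<in>{..<a}. colC rP m r b))) \<and>
    (\<forall>a<q. diag_monic_block (U * Q * V) (rP + (\<Sum>i<a. r i)) (rP + m + (\<Sum>i<a. r i)) (r a)) \<and>
    (\<forall>a<q. block_zero (U * Q * V) (rowS rP r q s a)
              (colP rP \<union> col0 rP m \<union> (\<Union>b\<in>{..a}. colC rP m r b)))"
proof -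
  obtain P' Q' rP m q r s where equiv: "simult_equiv P Q P' Q'" and nf: "normal_form l n P' Q' rP m q r s"
    using normal_form_exists[OF assms] by blast
  obtain U V where UV: "U \<in> carrier_mat l l" "unimodular U" "V \<in> carrier_mat n n" "unimodular V"
    and P': "P' = U * P * V" and Q': "Q' = U * Q * V"
    using equiv assms(1) unfolding simult_equiv_def by auto
  have cols: "colP rP \<union> col0 rP m \<union> (\<Union>b\<in>{..a}. colC rP m r b) = {..<rP + m + (\<Sum>i<Suc a. r i)}" for a
    unfolding lessThan_Suc_atMost[symmetric] by (rule column_groups_prefix)
  show ?thesis
    apply (rule exI[of _ U], rule exI[of _ V], rule exI[of _ rP], rule exI[of _ m], rule exI[of _ q],
        rule exI[of _ r], rule exI[of _ s])
    unfolding cols column_groups_prefix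
    using UV nf[unfolded normal_form_def normal_form_P_def normal_form_Q_def P' Q']
    by (elim conjE) (intro conjI; assumption)
qed

end
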